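(* Let $n\ge1$, $\nu\ge1$ be integers and $\delta\in\{0,1,2\}$. The orthogonal graph $\mathcal{O}^{(2\nu+\delta)}_{2^n}$ is vertex transitive and arc transitive.
   Context: Let $V^{2\nu+\delta}$ be the set of tuples $\vec a=(a_1,\ldots,a_{2\nu+\delta})\in(\mathbb{Z}_{2^n})^{2\nu+\delta}$ such that some $a_i$ is a unit of $\mathbb{Z}_{2^n}$. Write $\vec a\sim\vec b$ if $\vec a=\lambda\vec b$ for some $\lambda\in\mathbb{Z}_{2^n}^\times$, let $[\vec a]$ denote the equivalence class and $V^{2\nu+\delta}_\sim$ the set of classes. Let $G_{2\nu+\delta,\Delta}=\begin{pmatrix}0&I_\nu&\\ &0&\\ &&\Delta\end{pmatrix}$ over $\mathbb{Z}_{2^n}$ (first two block sizes $\nu$, unspecified blocks zero), where $\Delta$ is empty if $\delta=0$, $\Delta=(1)$ if $\delta=1$, and $\Delta=\begin{pmatrix}z&1\\0&z\end{pmatrix}$ if $\delta=2$, with $z$ a fixed unit of $\mathbb{Z}_{2^n}$. The orthogonal graph $\mathcal{O}^{(2\nu+\delta)}_{2^n}$ has vertex set $\{[\vec a]\in V^{2\nu+\delta}_\sim:\vec a\,G_{2\nu+\delta,\Delta}\,\vec a^t=0\}$, with $[\vec a]$ adjacent to $[\vec b]$ iff $\vec a(G_{2\nu+\delta,\Delta}+G_{2\nu+\delta,\Delta}^t)\vec b^t\in\mathbb{Z}_{2^n}^\times$. A graph is arc transitive if its automorphism group acts transitively on ordered pairs of adjacent vertices. *)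

theory Defs
  imports Main
begin

text \<open>The ring Z_{2^n} is modelled by the integers 0..2^n-1 with arithmetic mod 2^n.
  Vectors of length m are functions nat => int, zero outside {0..<m}.\<close>

definition zunit :: "nat \<Rightarrow> int \<Rightarrow> bool" where
  "zunit n a \<longleftrightarrow> (\<exists>b. (a * b) mod (2 ^ n) = 1 mod (2 ^ n))"

text \<open>The Gram matrix G_{2nu+delta,Delta}, 0-based indices.\<close>
definition Gmat :: "nat \<Rightarrow> nat \<Rightarrow> int \<Rightarrow> nat \<Rightarrow> nat \<Rightarrow> int" where
  "Gmat \<nu> \<delta> z i j =
     (if i < \<nu> \<and> j = \<nu> + i then 1
      else if \<delta> = 1 \<and> i = 2*\<nu> \<and> j = 2*\<nu> then 1
      else if \<delta> = 2 \<and> i = 2*\<nu> \<and> j = 2*\<nu> then z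
      else if \<delta> = 2 \<and> i = 2*\<nu> \<and> j = 2*\<nu> + 1 then 1
      else if \<delta> = 2 \<and> i = 2*\<nu> + 1 \<and> j = 2*\<nu> + 1 then z
      else 0)"

definition bform :: "nat \<Rightarrow> nat \<Rightarrow> (nat \<Rightarrow> int) \<Rightarrow> (nat \<Rightarrow> nat \<Rightarrow> int) \<Rightarrow> (nat \<Rightarrow> int) \<Rightarrow> int" where
  "bform n m a M b = (\<Sum>i<m. \<Sum>j<m. a i * M i j * b j) mod (2 ^ n)"

definition Vset :: "nat \<Rightarrow> nat \<Rightarrow> (nat \<Rightarrow> int) set" where
  "Vset n m = {a. (\<forall>i. m \<le> i \<longrightarrow> a i = 0) \<and> (\<forall>i<m. 0 \<le> a i \<and> a i < 2 ^ n)
                  \<and> (\<exists>i<m. zunit n (a i))}"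

definition eqcls :: "nat \<Rightarrow> nat \<Rightarrow> (nat \<Rightarrow> int) \<Rightarrow> (nat \<Rightarrow> int) set" where
  "eqcls n m a = {b \<in> Vset n m. \<exists>l. zunit n l \<and> (\<forall>i<m. b i = (l * a i) mod (2 ^ n))}"

definition orth_vertices :: "nat \<Rightarrow> nat \<Rightarrow> nat \<Rightarrow> int \<Rightarrow> (nat \<Rightarrow> int) set set" where
  "orth_vertices n \<nu> \<delta> z =
     {eqcls n (2*\<nu>+\<delta>) a | a. a \<in> Vset n (2*\<nu>+\<delta>) \<and> bform n (2*\<nu>+\<delta>) a (Gmat \<nu> \<delta> z) a = 0}"

definition orth_adj :: "nat \<Rightarrow> nat \<Rightarrow> nat \<Rightarrow> int \<Rightarrow> (nat \<Rightarrow> int) set \<Rightarrow> (nat \<Rightarrow> int) set \<Rightarrow> bool" where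
  "orth_adj n \<nu> \<delta> z X Y \<longleftrightarrow>
     (\<exists>a\<in>X. \<exists>b\<in>Y. zunit n (bform n (2*\<nu>+\<delta>) a (\<lambda>i j. Gmat \<nu> \<delta> z i j + Gmat \<nu> \<delta> z j i) b))"

definition graph_aut :: "'v set \<Rightarrow> ('v \<Rightarrow> 'v \<Rightarrow> bool) \<Rightarrow> ('v \<Rightarrow> 'v) \<Rightarrow> bool" where
  "graph_aut Vs E \<sigma> \<longleftrightarrow> bij_betw \<sigma> Vs Vs \<and> (\<forall>x\<in>Vs. \<forall>y\<in>Vs. E x y \<longleftrightarrow> E (\<sigma> x) (\<sigma> y))"

definition vertex_transitive :: "'v set \<Rightarrow> ('v \<Rightarrow> 'v \<Rightarrow> bool) \<Rightarrow> bool" where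
  "vertex_transitive Vs E \<longleftrightarrow> (\<forall>x\<in>Vs. \<forall>y\<in>Vs. \<exists>\<sigma>. graph_aut Vs E \<sigma> \<and> \<sigma> x = y)"

definition arc_transitive :: "'v set \<Rightarrow> ('v \<Rightarrow> 'v \<Rightarrow> bool) \<Rightarrow> bool" where
  "arc_transitive Vs E \<longleftrightarrow>
     (\<forall>x\<in>Vs. \<forall>y\<in>Vs. \<forall>x'\<in>Vs. \<forall>y'\<in>Vs. E x y \<longrightarrow> E x' y' \<longrightarrow>
        (\<exists>\<sigma>. graph_aut Vs E \<sigma> \<and> \<sigma> x = x' \<and> \<sigma> y = y'))"

end

theory Submission
  imports Defs "HOL-Number_Theory.Cong"
begin

(*
  Everything is lifted to integer vectors. An isometry of the integral quadratic form x G x^t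
  (a linear map with a linear inverse, preserving supports and the form exactly) keeps some entry
  odd, respects congruences mod 2^n and preserves the polar form; hence it permutes the isotropic
  points and preserves adjacency, i.e. it induces a graph automorphism. It therefore suffices to
  move the base vertex [e_0] to every vertex and the base arc ([e_0], [e_nu]) to every arc.

  An isotropic vector a has an odd hyperbolic coordinate, because z is odd and so the block Delta
  is anisotropic mod 2. After a coordinate permutation this is a_0, the polar pairing of a with
  e_nu, and an Eichler transformation for the hyperbolic pair (e_0, e_nu) maps e_0 to a unit
  multiple of a modulo 2^n. For an arc ([a], [b]) the pull-back of b pairs oddly with e_0, and an
  Eichler transformation fixing e_0 then moves e_nu onto it.
*)

section \<open>Bilinear and quadratic forms of a matrix\<close>

definition bilin :: "(nat \<Rightarrow> nat \<Rightarrow> 'a::comm_ring_1) \<Rightarrow> nat \<Rightarrow> (nat \<Rightarrow> 'a) \<Rightarrow> (nat \<Rightarrow> 'a) \<Rightarrow> 'a" where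
  "bilin M m x y = (\<Sum>i<m. \<Sum>j<m. x i * M i j * y j)"

definition quad :: "(nat \<Rightarrow> nat \<Rightarrow> 'a::comm_ring_1) \<Rightarrow> nat \<Rightarrow> (nat \<Rightarrow> 'a) \<Rightarrow> 'a" where
  "quad M m x = bilin M m x x"

definition polar :: "(nat \<Rightarrow> nat \<Rightarrow> 'a::comm_ring_1) \<Rightarrow> nat \<Rightarrow> (nat \<Rightarrow> 'a) \<Rightarrow> (nat \<Rightarrow> 'a) \<Rightarrow> 'a" where
  "polar M m x y = bilin M m x y + bilin M m y x"

lemma bilin_add_left [simp]: "bilin M m (\<lambda>i. x i + y i) v = bilin M m x v + bilin M m y v"
  and bilin_add_right [simp]: "bilin M m v (\<lambda>i. x i + y i) = bilin M m v x + bilin M m v y"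
  and bilin_diff_left [simp]: "bilin M m (\<lambda>i. x i - y i) v = bilin M m x v - bilin M m y v"
  and bilin_diff_right [simp]: "bilin M m v (\<lambda>i. x i - y i) = bilin M m v x - bilin M m v y"
  and bilin_scale_left [simp]: "bilin M m (\<lambda>i. c * x i) v = c * bilin M m x v"
  and bilin_scale_right [simp]: "bilin M m v (\<lambda>i. c * x i) = c * bilin M m v x"
  and bilin_scale_left' [simp]: "bilin M m (\<lambda>i. x i * c) v = bilin M m x v * c"
  and bilin_scale_right' [simp]: "bilin M m v (\<lambda>i. x i * c) = bilin M m v x * c"
  and bilin_minus_left [simp]: "bilin M m (\<lambda>i. - x i) v = - bilin M m x v"
  and bilin_minus_right [simp]: "bilin M m v (\<lambda>i. - x i) = - bilin M m v x"
  by (simp_all add: bilin_def algebra_simps sum.distrib sum_subtractf sum_distrib_left sum_negf)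

lemma polar_add_left [simp]: "polar M m (\<lambda>i. x i + y i) v = polar M m x v + polar M m y v"
  and polar_add_right [simp]: "polar M m v (\<lambda>i. x i + y i) = polar M m v x + polar M m v y"
  and polar_diff_left [simp]: "polar M m (\<lambda>i. x i - y i) v = polar M m x v - polar M m y v"
  and polar_diff_right [simp]: "polar M m v (\<lambda>i. x i - y i) = polar M m v x - polar M m v y"
  and polar_scale_left [simp]: "polar M m (\<lambda>i. c * x i) v = c * polar M m x v"
  and polar_scale_right [simp]: "polar M m v (\<lambda>i. c * x i) = c * polar M m v x"
  and polar_minus_left [simp]: "polar M m (\<lambda>i. - x i) v = - polar M m x v"
  and polar_minus_right [simp]: "polar M m v (\<lambda>i. - x i) = - polar M m v x"
  by (simp_all add: polar_def algebra_simps)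

lemma polar_commute: "polar M m x y = polar M m y x"
  by (simp add: polar_def)

lemma polar_self: "polar M m x x = 2 * quad M m x"
  by (simp add: polar_def quad_def)

lemma quad_add: "quad M m (\<lambda>i. x i + y i) = quad M m x + quad M m y + polar M m x y"
  by (simp add: quad_def polar_def)

lemma quad_scale: "quad M m (\<lambda>i. c * x i) = c * c * quad M m x"
  by (simp add: quad_def)

lemma bilin_add_matrix:
  "bilin (\<lambda>i j. M i j + M' i j) m x y = bilin M m x y + bilin M' m x y"
  by (simp add: bilin_def algebra_simps sum.distrib)

lemma mult_if_zero: "(a::'a::mult_zero) * (if P then c else 0) * b = (if P then a * c * b else 0)"
  by simp

lemma bilin_entry:
  assumes "p < m" "q < m"
  shows "bilin (\<lambda>i j. if i = p \<and> j = q then c else 0) m x y = x p * c * y q"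
proof -
  have "(\<Sum>j<m. x i * (if i = p \<and> j = q then c else 0) * y j) = (if i = p then x p * c * y q else 0)"
    for i using assms by (cases "i = p") (simp_all add: mult_if_zero)
  then show ?thesis
    using assms by (simp add: bilin_def)
qed

lemma bilin_hyperbolic:
  assumes "2 * \<nu> \<le> m"
  shows "bilin (\<lambda>i j. if i < \<nu> \<and> j = \<nu> + i then 1 else 0) m x y = (\<Sum>k<\<nu>. x k * y (\<nu> + k))"
proof -
  have "bilin (\<lambda>i j. if i < \<nu> \<and> j = \<nu> + i then 1 else 0) m x y
      = (\<Sum>i<m. if i < \<nu> then x i * y (\<nu> + i) else 0)"
    unfolding bilin_def
    by (intro sum.cong refl) (use assms in \<open>simp add: mult_if_zero sum.delta\<close>)
  also have "\<dots> = (\<Sum>k<\<nu>. x k * y (\<nu> + k))"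
  proof -
    have "{i. i < m \<and> i < \<nu>} = {..<\<nu>}"
      using assms by auto
    then show ?thesis
      by (simp add: sum.If_cases Int_def)
  qed
  finally show ?thesis .
qed

section \<open>Isometries and Eichler transformations\<close>

definition eichler :: "(nat \<Rightarrow> nat \<Rightarrow> 'a::comm_ring_1) \<Rightarrow> nat \<Rightarrow> (nat \<Rightarrow> 'a) \<Rightarrow> (nat \<Rightarrow> 'a)
    \<Rightarrow> (nat \<Rightarrow> 'a) \<Rightarrow> (nat \<Rightarrow> 'a)" where
  "eichler M m u w x =
     (\<lambda>i. x i + polar M m x u * w i - (polar M m x w + quad M m w * polar M m x u) * u i)"

lemma eichler_add: "eichler M m u w (\<lambda>i. x i + y i) = (\<lambda>i. eichler M m u w x i + eichler M m u w y i)"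
  by (simp add: eichler_def polar_def algebra_simps)

lemma eichler_scale: "eichler M m u w (\<lambda>i. c * x i) = (\<lambda>i. c * eichler M m u w x i)"
  by (simp add: eichler_def polar_def algebra_simps)

lemma quad_eichler:
  assumes "quad M m u = 0" "polar M m u w = 0"
  shows "quad M m (eichler M m u w x) = quad M m x"
proof -
  have "bilin M m u u = 0" "bilin M m u w = - bilin M m w u"
    using assms by (simp_all add: quad_def polar_def eq_neg_iff_add_eq_0)
  then show ?thesis
    by (simp add: eichler_def quad_def polar_def algebra_simps)
qed

lemma eichler_inverse:
  assumes "quad M m u = 0" "polar M m u w = 0"
  shows "eichler M m u (\<lambda>i. - w i) (eichler M m u w x) = x"
proof -
  have "bilin M m u u = 0" "bilin M m u w = - bilin M m w u"
    using assms by (simp_all add: quad_def polar_def eq_neg_iff_add_eq_0)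
  then show ?thesis
    by (simp add: eichler_def quad_def polar_def algebra_simps)
qed

definition supported :: "nat \<Rightarrow> (nat \<Rightarrow> 'a::zero) \<Rightarrow> bool" where
  "supported m x \<longleftrightarrow> (\<forall>i. m \<le> i \<longrightarrow> x i = 0)"

definition isometry :: "(nat \<Rightarrow> nat \<Rightarrow> 'a::comm_ring_1) \<Rightarrow> nat \<Rightarrow> ((nat \<Rightarrow> 'a) \<Rightarrow> (nat \<Rightarrow> 'a)) \<Rightarrow> bool" where
  "isometry M m T \<longleftrightarrow> (\<forall>x y. T (\<lambda>i. x i + y i) = (\<lambda>i. T x i + T y i))
     \<and> (\<forall>c x. T (\<lambda>i. c * x i) = (\<lambda>i. c * T x i))
     \<and> (\<forall>x. supported m x \<longrightarrow> supported m (T x)) \<and> (\<forall>x. quad M m (T x) = quad M m x)"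

definition isometry_pair :: "(nat \<Rightarrow> nat \<Rightarrow> 'a::comm_ring_1) \<Rightarrow> nat
    \<Rightarrow> ((nat \<Rightarrow> 'a) \<Rightarrow> (nat \<Rightarrow> 'a)) \<Rightarrow> ((nat \<Rightarrow> 'a) \<Rightarrow> (nat \<Rightarrow> 'a)) \<Rightarrow> bool" where
  "isometry_pair M m T S \<longleftrightarrow> isometry M m T \<and> isometry M m S \<and> (\<forall>x. S (T x) = x) \<and> (\<forall>x. T (S x) = x)"

lemma isometry_add: "isometry M m T \<Longrightarrow> T (\<lambda>i. x i + y i) = (\<lambda>i. T x i + T y i)"
  and isometry_scale: "isometry M m T \<Longrightarrow> T (\<lambda>i. c * x i) = (\<lambda>i. c * T x i)"
  and isometry_supported: "isometry M m T \<Longrightarrow> supported m x \<Longrightarrow> supported m (T x)"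
  and isometry_quad: "isometry M m T \<Longrightarrow> quad M m (T x) = quad M m x"
  by (simp_all add: isometry_def)

lemma isometry_pairD:
  assumes "isometry_pair M m T S"
  shows "isometry M m T" "isometry M m S" "S (T x) = x" "T (S x) = x"
  using assms by (simp_all add: isometry_pair_def)

lemma polar_isometry:
  assumes "isometry M m T"
  shows "polar M m (T x) (T y) = polar M m x y"
proof -
  have "quad M m (\<lambda>i. T x i + T y i) = quad M m (\<lambda>i. x i + y i)"
    using assms by (simp add: isometry_quad flip: isometry_add)
  then show ?thesis
    using assms by (simp add: quad_add isometry_quad)
qed

lemma isometry_pair_sym: "isometry_pair M m T S \<Longrightarrow> isometry_pair M m S T"
  by (auto simp: isometry_pair_def)

lemma isometry_pair_comp:
  "isometry_pair M m T S \<Longrightarrow> isometry_pair M m T' S' \<Longrightarrow>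
     isometry_pair M m (\<lambda>x. T (T' x)) (\<lambda>x. S' (S x))"
  by (simp add: isometry_pair_def isometry_def)

lemma isometry_pair_eichler:
  assumes "quad M m u = 0" "polar M m u w = 0" "supported m u" "supported m w"
  shows "isometry_pair M m (eichler M m u w) (eichler M m u (\<lambda>i. - w i))"
proof -
  have "polar M m u (\<lambda>i. - w i) = 0"
    using assms(2) by simp
  then show ?thesis
    using assms eichler_inverse[of M m u] eichler_inverse[of M m u "\<lambda>i. - w i"]
    by (simp add: isometry_pair_def isometry_def eichler_add eichler_scale quad_eichler)
       (simp add: supported_def eichler_def)
qed

lemma isometry_pair_hyperbolic:
  assumes e: "quad M m e = 0" and f: "quad M m f = 0" and ef: "polar M m e f = 1"
    and xf: "polar M m x f = 1" and supp: "supported m e" "supported m f" "supported m x"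
  shows "\<exists>T S. isometry_pair M m T S \<and> T f = f \<and> T e = (\<lambda>i. x i - quad M m x * f i)"
proof -
  define c where "c = polar M m x e"
  \<comment> \<open>the component of x orthogonal to the hyperbolic plane spanned by e and f\<close>
  define w where "w = (\<lambda>i. x i - e i - c * f i)"
  have wf: "polar M m w f = 0"
    using e f ef xf by (simp add: w_def polar_self)
  have fe: "polar M m f e = 1"
    using ef by (simp add: polar_commute)
  have we: "polar M m w e = 0"
    using e fe by (simp add: w_def c_def polar_self)
  have "quad M m x = quad M m (\<lambda>i. w i + (e i + c * f i))"
    by (simp add: w_def)
  also have "\<dots> = quad M m w + c"
    using e f ef we wf by (simp add: quad_add quad_scale polar_commute[of M m w])
  finally have qx: "quad M m x = quad M m w + c" .
  have fw: "polar M m f w = 0" using wf by (simp add: polar_commute)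
  have "supported m w" using supp by (simp add: w_def supported_def)
  then have "isometry_pair M m (eichler M m f w) (eichler M m f (\<lambda>i. - w i))"
    using isometry_pair_eichler f fw supp by blast
  moreover have "eichler M m f w f = f"
    using f fw by (simp add: eichler_def polar_self)
  moreover have "eichler M m f w e = (\<lambda>i. x i - quad M m x * f i)"
  proof -
    have "polar M m e w = 0" using we by (simp add: polar_commute)
    then have "eichler M m f w e = (\<lambda>i. e i + w i - quad M m w * f i)"
      using ef by (simp add: eichler_def)
    then show ?thesis
      by (simp add: qx w_def algebra_simps)
  qed
  ultimately show ?thesis by blast
qed

section \<open>Projective points modulo a power of two\<close>

definition cong_vec :: "int \<Rightarrow> nat \<Rightarrow> (nat \<Rightarrow> int) \<Rightarrow> (nat \<Rightarrow> int) \<Rightarrow> bool" where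
  "cong_vec p m x y \<longleftrightarrow> (\<forall>i<m. [x i = y i] (mod p))"

lemma cong_vec_refl [simp]: "cong_vec p m x x"
  and cong_vec_trans: "cong_vec p m x y \<Longrightarrow> cong_vec p m y y' \<Longrightarrow> cong_vec p m x y'"
  by (auto simp: cong_vec_def intro: cong_trans)

lemma cong_vec_isometry:
  assumes T: "isometry M m T" and "supported m x" "supported m y" and xy: "cong_vec p m x y"
  shows "cong_vec p m (T x) (T y)"
proof -
  define k where "k = (\<lambda>i. (y i - x i) div p)"
  have "y = (\<lambda>i. x i + p * k i)"
  proof
    fix i
    show "y i = x i + p * k i"
    proof (cases "i < m")
      case True
      then have "p dvd y i - x i"
        using xy by (simp add: cong_vec_def cong_iff_dvd_diff dvd_diff_commute)
      then show ?thesis by (simp add: k_def)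
    qed (use assms in \<open>simp add: supported_def k_def\<close>)
  qed
  then have "T y = (\<lambda>i. T x i + p * T k i)"
    using isometry_add[OF T] isometry_scale[OF T] by simp
  then show ?thesis
    by (simp add: cong_vec_def cong_iff_dvd_diff)
qed

lemma cong_bilin:
  "cong_vec p m x x' \<Longrightarrow> cong_vec p m y y' \<Longrightarrow> [bilin M m x y = bilin M m x' y'] (mod p)"
  unfolding bilin_def cong_vec_def by (intro cong_sum cong_mult cong_refl) auto

lemma cong_quad: "cong_vec p m x x' \<Longrightarrow> [quad M m x = quad M m x'] (mod p)"
  by (simp add: quad_def cong_bilin)

lemma cong_polar:
  "cong_vec p m x x' \<Longrightarrow> cong_vec p m y y' \<Longrightarrow> [polar M m x y = polar M m x' y'] (mod p)"
  by (simp add: polar_def cong_add cong_bilin)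

lemma bform_eq_quad: "bform n m a M a = quad M m a mod 2 ^ n"
  by (simp add: bform_def quad_def bilin_def)

lemma bform_eq_polar: "bform n m a (\<lambda>i j. M i j + M j i) b = polar M m a b mod 2 ^ n"
proof -
  have "(\<Sum>i<m. \<Sum>j<m. a i * (M i j + M j i) * b j)
      = (\<Sum>i<m. \<Sum>j<m. a i * M i j * b j) + (\<Sum>i<m. \<Sum>j<m. b j * M j i * a i)"
    by (simp add: algebra_simps sum.distrib)
  also have "(\<Sum>i<m. \<Sum>j<m. b j * M j i * a i) = (\<Sum>j<m. \<Sum>i<m. b j * M j i * a i)"
    by (rule sum.swap)
  finally show ?thesis
    by (simp add: bform_def polar_def bilin_def)
qed

definition isotropic_points :: "nat \<Rightarrow> nat \<Rightarrow> (nat \<Rightarrow> nat \<Rightarrow> int) \<Rightarrow> (nat \<Rightarrow> int) set set" where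
  "isotropic_points n m M = {eqcls n m a | a. a \<in> Vset n m \<and> bform n m a M a = 0}"

definition polar_adj :: "nat \<Rightarrow> nat \<Rightarrow> (nat \<Rightarrow> nat \<Rightarrow> int) \<Rightarrow> (nat \<Rightarrow> int) set \<Rightarrow> (nat \<Rightarrow> int) set \<Rightarrow> bool" where
  "polar_adj n m M X Y \<longleftrightarrow> (\<exists>a\<in>X. \<exists>b\<in>Y. zunit n (bform n m a (\<lambda>i j. M i j + M j i) b))"

lemma isometry_pair_odd:
  fixes T S :: "(nat \<Rightarrow> int) \<Rightarrow> (nat \<Rightarrow> int)"
  assumes T: "isometry_pair M m T S" and x: "supported m x" "\<exists>i<m. odd (x i)"
  shows "\<exists>i<m. odd (T x i)"
proof (rule ccontr)
  assume "\<not> ?thesis"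
  moreover have "supported m (T x)"
    using isometry_supported[OF isometry_pairD(1)[OF T] x(1)] .
  ultimately have "T x = (\<lambda>i. 2 * (T x i div 2))"
    unfolding supported_def fun_eq_iff by (metis dvd_mult_div_cancel dvd_0_right not_le)
  then have "x = (\<lambda>i. 2 * S (\<lambda>i. T x i div 2) i)"
    using isometry_scale[OF isometry_pairD(2)[OF T]] isometry_pairD(3)[OF T] by metis
  then show False
    using x(2) by (metis dvd_triv_left)
qed

locale pow2_modulus =
  fixes n :: nat
  assumes n_pos: "1 \<le> n"
begin

abbreviation N :: int where "N \<equiv> 2 ^ n"

lemma N_gt_1: "1 < N"
  using n_pos by (simp add: one_less_power)

lemma even_mod_N: "even (a mod N) \<longleftrightarrow> even a"
  using n_pos by (simp add: dvd_mod_iff)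

lemma cong_even_iff: "[a = b] (mod N) \<Longrightarrow> even a \<longleftrightarrow> even b"
  by (metis cong_def even_mod_N)

lemma zunit_iff_odd: "zunit n a \<longleftrightarrow> odd a"
proof
  assume "zunit n a"
  then obtain b where "[a * b = 1] (mod N)"
    by (auto simp: zunit_def cong_def)
  then show "odd a"
    using cong_even_iff by fastforce
next
  assume "odd a"
  then have "coprime a N" by simp
  then obtain b where "[a * b = 1] (mod N)"
    using cong_solve_coprime_int by blast
  then show "zunit n a"
    by (auto simp: zunit_def cong_def)
qed

lemma odd_inverse_mod_N:
  assumes "odd a"
  obtains b where "odd b" "[a * b = 1] (mod N)"
proof -
  obtain b where b: "[a * b = 1] (mod N)"
    using assms zunit_iff_odd by (auto simp: zunit_def cong_def)
  then have "odd b"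
    using cong_even_iff by fastforce
  show ?thesis using \<open>odd b\<close> b by (rule that)
qed

definition reduce :: "nat \<Rightarrow> (nat \<Rightarrow> int) \<Rightarrow> (nat \<Rightarrow> int)" where
  "reduce m x = (\<lambda>i. if i < m then x i mod N else 0)"

lemma cong_vec_reduce: "cong_vec N m (reduce m x) x"
  by (simp add: cong_vec_def reduce_def)

lemma reduce_cong_vec: "cong_vec N m x y \<Longrightarrow> reduce m x = reduce m y"
  by (auto simp: reduce_def cong_vec_def cong_def)

lemma supported_reduce: "supported m (reduce m x)"
  by (simp add: supported_def reduce_def)

lemma Vset_iff: "a \<in> Vset n m \<longleftrightarrow> supported m a \<and> (\<forall>i<m. 0 \<le> a i \<and> a i < N) \<and> (\<exists>i<m. odd (a i))"
  by (auto simp: Vset_def supported_def zunit_iff_odd)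

lemma reduce_in_Vset: "\<exists>i<m. odd (x i) \<Longrightarrow> reduce m x \<in> Vset n m"
  using N_gt_1 by (auto simp: Vset_iff reduce_def supported_def even_mod_N)

lemma eqcls_eq_image:
  assumes "\<exists>i<m. odd (a i)"
  shows "eqcls n m a = (\<lambda>l. reduce m (\<lambda>i. l * a i)) ` {l. odd l}"
proof (intro set_eqI iffI)
  fix b
  assume "b \<in> eqcls n m a"
  then obtain l where "b \<in> Vset n m" "odd l" "\<forall>i<m. b i = (l * a i) mod N"
    by (auto simp: eqcls_def zunit_iff_odd)
  then have "b = reduce m (\<lambda>i. l * a i)" and "odd l"
    by (auto simp: Vset_iff supported_def reduce_def)
  then show "b \<in> (\<lambda>l. reduce m (\<lambda>i. l * a i)) ` {l. odd l}"
    by blast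
next
  fix b
  assume "b \<in> (\<lambda>l. reduce m (\<lambda>i. l * a i)) ` {l. odd l}"
  then obtain l where l: "odd l" and b: "b = reduce m (\<lambda>i. l * a i)"
    by blast
  have "b \<in> Vset n m"
    unfolding b by (rule reduce_in_Vset) (use assms l in auto)
  then show "b \<in> eqcls n m a"
    using l by (auto simp: eqcls_def zunit_iff_odd b reduce_def)
qed

lemma eqcls_cong_vec:
  assumes "cong_vec N m a b"
  shows "eqcls n m a = eqcls n m b"
proof -
  have "(l * a i) mod N = (l * b i) mod N" if "i < m" for l i
    using assms that unfolding cong_vec_def cong_def by (metis mod_mult_right_eq)
  then show ?thesis
    unfolding eqcls_def by (intro Collect_cong conj_cong refl ex_cong1) auto
qed

lemma eqcls_scale:
  assumes a: "\<exists>i<m. odd (a i)" and l: "odd l"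
  shows "eqcls n m (\<lambda>i. l * a i) = eqcls n m a"
proof -
  have la: "\<exists>i<m. odd (l * a i)"
    using a l by auto
  have "(\<lambda>k. reduce m (\<lambda>i. k * (l * a i))) ` {k. odd k} = (\<lambda>k. reduce m (\<lambda>i. k * a i)) ` {k. odd k}"
  proof (intro set_eqI iffI)
    fix b
    assume "b \<in> (\<lambda>k. reduce m (\<lambda>i. k * (l * a i))) ` {k. odd k}"
    then obtain k where "odd k" "b = reduce m (\<lambda>i. (k * l) * a i)"
      by (auto simp: mult.assoc)
    then show "b \<in> (\<lambda>k. reduce m (\<lambda>i. k * a i)) ` {k. odd k}"
      using l by (intro rev_image_eqI[of "k * l"]) auto
  next
    fix b
    assume "b \<in> (\<lambda>k. reduce m (\<lambda>i. k * a i)) ` {k. odd k}"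
    then obtain k where k: "odd k" "b = reduce m (\<lambda>i. k * a i)"
      by blast
    obtain l' where l': "odd l'" "[l * l' = 1] (mod N)"
      using odd_inverse_mod_N[OF l] .
    have "[k * l' * (l * a i) = k * a i] (mod N)" for i
      using cong_scalar_left[OF cong_scalar_right[OF l'(2), of "a i"], of k]
      by (simp add: ac_simps)
    then have "cong_vec N m (\<lambda>i. (k * l') * (l * a i)) (\<lambda>i. k * a i)"
      by (simp add: cong_vec_def)
    then have "b = reduce m (\<lambda>i. (k * l') * (l * a i))"
      using k(2) reduce_cong_vec by simp
    then show "b \<in> (\<lambda>k. reduce m (\<lambda>i. k * (l * a i))) ` {k. odd k}"
      using k l' by (intro rev_image_eqI[of "k * l'"]) auto
  qed
  then show ?thesis
    by (simp add: eqcls_eq_image[OF la] eqcls_eq_image[OF a])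
qed

definition class_map :: "nat \<Rightarrow> ((nat \<Rightarrow> int) \<Rightarrow> (nat \<Rightarrow> int)) \<Rightarrow> (nat \<Rightarrow> int) set \<Rightarrow> (nat \<Rightarrow> int) set" where
  "class_map m T X = (\<lambda>x. reduce m (T x)) ` X"

lemma class_map_eqcls:
  assumes T: "isometry_pair M m T S" and a: "supported m a" "\<exists>i<m. odd (a i)"
  shows "class_map m T (eqcls n m a) = eqcls n m (T a)"
proof -
  note iso = isometry_pairD(1)[OF T]
  have "reduce m (T (reduce m (\<lambda>i. l * a i))) = reduce m (\<lambda>i. l * T a i)" for l
  proof -
    have "supported m (\<lambda>i. l * a i)"
      using a by (simp add: supported_def)
    then have "cong_vec N m (T (reduce m (\<lambda>i. l * a i))) (T (\<lambda>i. l * a i))"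
      using iso supported_reduce cong_vec_reduce by (blast intro: cong_vec_isometry)
    then show ?thesis
      using isometry_scale[OF iso] reduce_cong_vec by metis
  qed
  then have "class_map m T (eqcls n m a) = (\<lambda>l. reduce m (\<lambda>i. l * T a i)) ` {l. odd l}"
    by (simp add: class_map_def eqcls_eq_image[OF a(2)] image_image)
  also have "\<dots> = eqcls n m (T a)"
    using eqcls_eq_image[OF isometry_pair_odd[OF T a]] by simp
  finally show ?thesis .
qed

lemma isotropic_pointsE:
  assumes "X \<in> isotropic_points n m M"
  obtains a where "a \<in> Vset n m" "N dvd quad M m a" "X = eqcls n m a"
  using assms by (auto simp: isotropic_points_def bform_eq_quad)

lemma eqcls_in_isotropic_points:
  assumes "\<exists>i<m. odd (a i)" "N dvd quad M m a"
  shows "eqcls n m a \<in> isotropic_points n m M"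
proof -
  have "[quad M m (reduce m a) = quad M m a] (mod N)"
    by (rule cong_quad[OF cong_vec_reduce])
  then have "bform n m (reduce m a) M (reduce m a) = 0"
    using assms(2) by (simp add: bform_eq_quad cong_def)
  moreover have "eqcls n m (reduce m a) = eqcls n m a"
    by (rule eqcls_cong_vec[OF cong_vec_reduce])
  ultimately show ?thesis
    using reduce_in_Vset[OF assms(1)] unfolding isotropic_points_def by blast
qed

lemma polar_adj_eqcls_iff:
  assumes a: "\<exists>i<m. odd (a i)" and b: "\<exists>i<m. odd (b i)"
  shows "polar_adj n m M (eqcls n m a) (eqcls n m b) \<longleftrightarrow> odd (polar M m a b)"
proof -
  have "odd (polar M m (reduce m (\<lambda>i. l * a i)) (reduce m (\<lambda>i. k * b i)))
      \<longleftrightarrow> odd (l * k * polar M m a b)" for l k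
    using cong_even_iff[OF cong_polar[OF cong_vec_reduce cong_vec_reduce]] by simp
  then have "polar_adj n m M (eqcls n m a) (eqcls n m b)
      \<longleftrightarrow> (\<exists>l k. odd l \<and> odd k \<and> odd (l * k * polar M m a b))"
    by (auto simp: polar_adj_def eqcls_eq_image[OF a] eqcls_eq_image[OF b] bform_eq_polar
        zunit_iff_odd even_mod_N)
  also have "\<dots> \<longleftrightarrow> odd (polar M m a b)"
    by (auto intro: exI[of _ 1])
  finally show ?thesis .
qed

lemma class_map_isotropic_points:
  assumes T: "isometry_pair M m T S" and X: "X \<in> isotropic_points n m M"
  shows "class_map m T X \<in> isotropic_points n m M" and "class_map m S (class_map m T X) = X"
proof -
  obtain a where a: "a \<in> Vset n m" "N dvd quad M m a" "X = eqcls n m a"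
    using X by (rule isotropic_pointsE)
  note iso = isometry_pairD(1)[OF T] and TS = isometry_pairD(3)[OF T, of a]
  have sa: "supported m a" "\<exists>i<m. odd (a i)"
    using a(1) by (simp_all add: Vset_iff)
  have Ta: "class_map m T X = eqcls n m (T a)"
    using class_map_eqcls[OF T sa] a(3) by simp
  show "class_map m T X \<in> isotropic_points n m M"
    unfolding Ta using isometry_pair_odd[OF T sa] a(2) isometry_quad[OF iso]
    by (simp add: eqcls_in_isotropic_points)
  show "class_map m S (class_map m T X) = X"
    using class_map_eqcls[OF isometry_pair_sym[OF T] isometry_supported[OF iso sa(1)]
        isometry_pair_odd[OF T sa]] Ta TS a(3) by simp
qed

lemma class_map_polar_adj:
  assumes T: "isometry_pair M m T S"
    and X: "X \<in> isotropic_points n m M" and Y: "Y \<in> isotropic_points n m M"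
  shows "polar_adj n m M (class_map m T X) (class_map m T Y) \<longleftrightarrow> polar_adj n m M X Y"
proof -
  obtain a where a: "a \<in> Vset n m" "X = eqcls n m a"
    using X by (rule isotropic_pointsE)
  obtain b where b: "b \<in> Vset n m" "Y = eqcls n m b"
    using Y by (rule isotropic_pointsE)
  have sa: "supported m a" "\<exists>i<m. odd (a i)" and sb: "supported m b" "\<exists>i<m. odd (b i)"
    using a(1) b(1) by (simp_all add: Vset_iff)
  show ?thesis
    by (simp add: a(2) b(2) class_map_eqcls[OF T] sa sb polar_adj_eqcls_iff
        isometry_pair_odd[OF T] polar_isometry[OF isometry_pairD(1)[OF T]])
qed

lemma class_map_graph_aut:
  assumes T: "isometry_pair M m T S"
  shows "graph_aut (isotropic_points n m M) (polar_adj n m M) (class_map m T)"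
proof -
  note S = isometry_pair_sym[OF T]
  have "bij_betw (class_map m T) (isotropic_points n m M) (isotropic_points n m M)"
    by (rule bij_betw_byWitness[where f' = "class_map m S"])
      (auto simp: class_map_isotropic_points[OF T] class_map_isotropic_points[OF S])
  then show ?thesis
    by (simp add: graph_aut_def class_map_polar_adj[OF T])
qed

lemma isometry_pair_hyperbolic_mod:
  assumes e: "quad M m e = 0" and f: "quad M m f = 0" and ef: "polar M m e f = 1"
    and x: "odd (polar M m x f)" "N dvd quad M m x"
    and supp: "supported m e" "supported m f" "supported m x"
  shows "\<exists>T S l. isometry_pair M m T S \<and> T f = f \<and> odd l \<and> cong_vec N m (T e) (\<lambda>i. l * x i)"
proof -
  obtain l where l: "odd l" "[polar M m x f * l = 1] (mod N)"
    using odd_inverse_mod_N[OF x(1)] .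
  \<comment> \<open>a lift of l x whose pairing with f is exactly 1\<close>
  define y where "y = (\<lambda>i. l * x i + (1 - l * polar M m x f) * e i)"
  have "N dvd 1 - l * polar M m x f"
    using l(2) by (simp add: cong_iff_dvd_diff dvd_diff_commute mult.commute)
  then have yx: "cong_vec N m y (\<lambda>i. l * x i)"
    by (simp add: cong_vec_def cong_iff_dvd_diff y_def)
  have yf: "polar M m y f = 1"
    using ef by (simp add: y_def)
  have "[quad M m y = l * l * quad M m x] (mod N)"
    using cong_quad[OF yx] by (simp add: quad_scale)
  then have Ny: "N dvd quad M m y"
    using x(2) by (simp add: cong_dvd_iff)
  have "supported m y"
    using supp by (simp add: supported_def y_def)
  then obtain T S where T: "isometry_pair M m T S" "T f = f" "T e = (\<lambda>i. y i - quad M m y * f i)"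
    using isometry_pair_hyperbolic[OF e f ef yf supp(1,2)] by blast
  have "cong_vec N m (T e) y"
    using Ny by (simp add: T(3) cong_vec_def cong_iff_dvd_diff)
  then show ?thesis
    using T(1,2) l(1) cong_vec_trans[OF _ yx] by blast
qed

end

section \<open>Graph automorphisms\<close>

lemma graph_aut_comp:
  assumes f: "graph_aut V E f" and g: "graph_aut V E g"
  shows "graph_aut V E (g \<circ> f)"
proof -
  have bij: "bij_betw f V V" "bij_betw g V V"
    and Ef: "\<forall>x\<in>V. \<forall>y\<in>V. E x y \<longleftrightarrow> E (f x) (f y)"
    and Eg: "\<forall>x\<in>V. \<forall>y\<in>V. E x y \<longleftrightarrow> E (g x) (g y)"
    using f g by (simp_all add: graph_aut_def)
  have "E x y \<longleftrightarrow> E (g (f x)) (g (f y))" if "x \<in> V" "y \<in> V" for x y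
  proof -
    have "f x \<in> V" "f y \<in> V"
      using bij_betwE[OF bij(1)] that by auto
    then show ?thesis
      using Ef Eg that by blast
  qed
  then show ?thesis
    using bij_betw_trans[OF bij] by (simp add: graph_aut_def)
qed

lemma graph_aut_inv_into:
  assumes f: "graph_aut V E f"
  shows "graph_aut V E (inv_into V f)"
proof -
  have bij: "bij_betw f V V" and E: "\<forall>x\<in>V. \<forall>y\<in>V. E x y \<longleftrightarrow> E (f x) (f y)"
    using f by (simp_all add: graph_aut_def)
  have "E x y \<longleftrightarrow> E (inv_into V f x) (inv_into V f y)" if "x \<in> V" "y \<in> V" for x y
    using E bij that bij_betw_inv_into_right[OF bij] bij_betwE[OF bij_betw_inv_into[OF bij]]
    by metis
  then show ?thesis
    using bij_betw_inv_into[OF bij] by (simp add: graph_aut_def)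
qed

lemma arc_transitiveI:
  assumes "x0 \<in> V" "y0 \<in> V"
    and moves: "\<And>x y. x \<in> V \<Longrightarrow> y \<in> V \<Longrightarrow> E x y \<Longrightarrow> \<exists>\<sigma>. graph_aut V E \<sigma> \<and> \<sigma> x0 = x \<and> \<sigma> y0 = y"
  shows "arc_transitive V E"
  unfolding arc_transitive_def
proof (intro ballI impI)
  fix x y x' y'
  assume "x \<in> V" "y \<in> V" "x' \<in> V" "y' \<in> V" "E x y" "E x' y'"
  then obtain \<sigma> \<sigma>' where \<sigma>: "graph_aut V E \<sigma>" "\<sigma> x0 = x" "\<sigma> y0 = y"
    and \<sigma>': "graph_aut V E \<sigma>'" "\<sigma>' x0 = x'" "\<sigma>' y0 = y'"
    using moves by meson
  have "bij_betw \<sigma> V V"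
    using \<sigma>(1) by (simp add: graph_aut_def)
  then have "inv_into V \<sigma> x = x0" "inv_into V \<sigma> y = y0"
    using \<sigma>(2,3) assms(1,2) by (auto intro: bij_betw_inv_into_left)
  then show "\<exists>\<tau>. graph_aut V E \<tau> \<and> \<tau> x = x' \<and> \<tau> y = y'"
    using graph_aut_comp[OF graph_aut_inv_into[OF \<sigma>(1)] \<sigma>'(1)] \<sigma>'(2,3) by auto
qed

lemma vertex_transitiveI:
  assumes "x0 \<in> V" and moves: "\<And>x. x \<in> V \<Longrightarrow> \<exists>\<sigma>. graph_aut V E \<sigma> \<and> \<sigma> x0 = x"
  shows "vertex_transitive V E"
  unfolding vertex_transitive_def
proof (intro ballI)
  fix x y
  assume "x \<in> V" "y \<in> V"
  then obtain \<sigma> \<sigma>' where \<sigma>: "graph_aut V E \<sigma>" "\<sigma> x0 = x" and \<sigma>': "graph_aut V E \<sigma>'" "\<sigma>' x0 = y"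
    using moves by meson
  have "inv_into V \<sigma> x = x0"
    using \<sigma> assms(1) by (auto simp: graph_aut_def intro: bij_betw_inv_into_left)
  then show "\<exists>\<tau>. graph_aut V E \<tau> \<and> \<tau> x = y"
    using graph_aut_comp[OF graph_aut_inv_into[OF \<sigma>(1)] \<sigma>'(1)] \<sigma>'(2) by auto
qed

section \<open>The form of the orthogonal graph\<close>

definition anisotropic_bilin :: "nat \<Rightarrow> nat \<Rightarrow> int \<Rightarrow> (nat \<Rightarrow> int) \<Rightarrow> (nat \<Rightarrow> int) \<Rightarrow> int" where
  "anisotropic_bilin \<nu> \<delta> z x y =
     (if \<delta> = 1 then x (2*\<nu>) * y (2*\<nu>)
      else if \<delta> = 2 then x (2*\<nu>) * z * y (2*\<nu>) + x (2*\<nu>) * y (2*\<nu>+1) + x (2*\<nu>+1) * z * y (2*\<nu>+1)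
      else 0)"

lemma bilin_Gmat:
  assumes "\<delta> \<le> 2"
  shows "bilin (Gmat \<nu> \<delta> z) (2*\<nu>+\<delta>) x y = (\<Sum>k<\<nu>. x k * y (\<nu> + k)) + anisotropic_bilin \<nu> \<delta> z x y"
proof -
  let ?H = "\<lambda>i j. if i < \<nu> \<and> j = \<nu> + i then 1 else (0::int)"
  let ?E = "\<lambda>p q c i j. if i = p \<and> j = q then c else (0::int)"
  have "\<delta> = 0 \<or> \<delta> = 1 \<or> \<delta> = 2"
    using assms by auto
  then show ?thesis
  proof (elim disjE)
    assume "\<delta> = 0"
    moreover have "Gmat \<nu> 0 z = ?H"
      by (simp add: Gmat_def fun_eq_iff)
    ultimately show ?thesis
      by (simp add: bilin_hyperbolic anisotropic_bilin_def)
  next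
    assume d: "\<delta> = 1"
    have "Gmat \<nu> 1 z = (\<lambda>i j. ?H i j + ?E (2*\<nu>) (2*\<nu>) 1 i j)"
      by (auto simp: Gmat_def fun_eq_iff)
    then show ?thesis
      using d by (simp add: bilin_add_matrix bilin_hyperbolic bilin_entry anisotropic_bilin_def)
  next
    assume d: "\<delta> = 2"
    have "Gmat \<nu> 2 z = (\<lambda>i j. ?H i j + (?E (2*\<nu>) (2*\<nu>) z i j
        + (?E (2*\<nu>) (2*\<nu>+1) 1 i j + ?E (2*\<nu>+1) (2*\<nu>+1) z i j)))"
      by (auto simp: Gmat_def fun_eq_iff)
    then show ?thesis
      using d by (simp add: bilin_add_matrix bilin_hyperbolic bilin_entry anisotropic_bilin_def)
  qed
qed

lemma quad_Gmat:
  "\<delta> \<le> 2 \<Longrightarrow> quad (Gmat \<nu> \<delta> z) (2*\<nu>+\<delta>) x = (\<Sum>k<\<nu>. x k * x (\<nu> + k)) + anisotropic_bilin \<nu> \<delta> z x x"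
  by (simp add: quad_def bilin_Gmat)

definition unit_vec :: "nat \<Rightarrow> nat \<Rightarrow> int" where
  "unit_vec k = (\<lambda>i. if i = k then 1 else 0)"

lemma mult_unit_vec [simp]:
  "a * unit_vec k i = (if i = k then a else 0)" "unit_vec k i * a = (if i = k then a else 0)"
  by (simp_all add: unit_vec_def)

lemma supported_unit_vec: "k < m \<Longrightarrow> supported m (unit_vec k)"
  by (simp add: supported_def unit_vec_def)

lemma odd_entry_unit_vec: "k < m \<Longrightarrow> \<exists>i<m. odd (unit_vec k i)"
  by (auto simp: unit_vec_def)

lemma quad_Gmat_unit_vec:
  assumes "\<delta> \<le> 2" "k < 2*\<nu>"
  shows "quad (Gmat \<nu> \<delta> z) (2*\<nu>+\<delta>) (unit_vec k) = 0"
  using assms by (simp add: quad_Gmat anisotropic_bilin_def) (auto simp: unit_vec_def intro: sum.neutral)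

lemma polar_Gmat_unit_vec:
  assumes "\<delta> \<le> 2" "0 < \<nu>"
  shows "polar (Gmat \<nu> \<delta> z) (2*\<nu>+\<delta>) (unit_vec \<nu>) y = y 0"
  using assms by (simp add: polar_def bilin_Gmat anisotropic_bilin_def sum.delta)

lemma Gmat_isotropic_odd_hyperbolic_coord:
  assumes "\<delta> \<le> 2" "odd z" and odd: "\<exists>i<2*\<nu>+\<delta>. odd (a i)"
    and even: "even (quad (Gmat \<nu> \<delta> z) (2*\<nu>+\<delta>) a)"
  shows "\<exists>i<2*\<nu>. odd (a i)"
proof (rule ccontr)
  assume "\<not> ?thesis"
  then have hyp: "\<forall>i<2*\<nu>. even (a i)"
    by auto
  then have "even (\<Sum>k<\<nu>. a k * a (\<nu> + k))"
    by (intro dvd_sum) auto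
  then have aniso: "even (anisotropic_bilin \<nu> \<delta> z a a)"
    using even assms(1) by (simp add: quad_Gmat)
  obtain i where i: "i < 2*\<nu>+\<delta>" "2*\<nu> \<le> i" "odd (a i)"
    using odd hyp by (meson not_le)
  then have "\<delta> = 1 \<and> i = 2*\<nu> \<or> \<delta> = 2 \<and> (i = 2*\<nu> \<or> i = 2*\<nu>+1)"
    using assms(1) by auto
  then show False
    using aniso i(3) \<open>odd z\<close> by (auto simp: anisotropic_bilin_def)
qed

definition permute :: "(nat \<Rightarrow> nat) \<Rightarrow> (nat \<Rightarrow> 'a) \<Rightarrow> (nat \<Rightarrow> 'a)" where
  "permute \<pi> x = (\<lambda>i. x (\<pi> i))"

lemma isometry_pair_permute:
  assumes "\<delta> \<le> 2" and inv: "\<And>k. \<pi> (\<pi> k) = k" and fixed: "\<And>k. 2*\<nu> \<le> k \<Longrightarrow> \<pi> k = k"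
    and \<tau>: "\<And>k. k < \<nu> \<Longrightarrow> \<tau> k < \<nu>" "\<And>k. k < \<nu> \<Longrightarrow> \<tau> (\<tau> k) = k"
    and pairs: "\<And>k. k < \<nu> \<Longrightarrow> {\<pi> k, \<pi> (\<nu>+k)} = {\<tau> k, \<nu> + \<tau> k}"
  shows "isometry_pair (Gmat \<nu> \<delta> z) (2*\<nu>+\<delta>) (permute \<pi>) (permute \<pi>)"
proof -
  have "quad (Gmat \<nu> \<delta> z) (2*\<nu>+\<delta>) (permute \<pi> x) = quad (Gmat \<nu> \<delta> z) (2*\<nu>+\<delta>) x" for x
  proof -
    have "(\<Sum>k<\<nu>. x (\<pi> k) * x (\<pi> (\<nu>+k))) = (\<Sum>k<\<nu>. x (\<tau> k) * x (\<nu> + \<tau> k))"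
      by (intro sum.cong refl) (use pairs in \<open>fastforce simp: doubleton_eq_iff\<close>)
    also have "\<dots> = (\<Sum>k<\<nu>. x k * x (\<nu> + k))"
      by (rule sum.reindex_bij_witness[where i = \<tau> and j = \<tau>]) (auto simp: \<tau>)
    finally show ?thesis
      using assms(1) fixed by (simp add: quad_Gmat permute_def anisotropic_bilin_def)
  qed
  moreover have "supported (2*\<nu>+\<delta>) x \<Longrightarrow> supported (2*\<nu>+\<delta>) (permute \<pi> x)" for x
    using fixed by (simp add: supported_def permute_def)
  ultimately show ?thesis
    using inv by (auto simp: isometry_pair_def isometry_def permute_def)
qed

lemma exists_permute_hyperbolic_coord:
  assumes "\<delta> \<le> 2" "i < 2*\<nu>"
  shows "\<exists>\<pi>. isometry_pair (Gmat \<nu> \<delta> z) (2*\<nu>+\<delta>) (permute \<pi>) (permute \<pi>) \<and> \<pi> 0 = i"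
proof -
  obtain j p where j: "j < \<nu>" and ip: "i = j \<and> p = \<nu> + j \<or> i = \<nu> + j \<and> p = j"
  proof (cases "i < \<nu>")
    case True
    then show ?thesis by (intro that[of i "\<nu> + i"]) auto
  next
    case False
    then show ?thesis using assms(2) by (intro that[of "i - \<nu>" "i - \<nu>"]) auto
  qed
  \<comment> \<open>exchange the hyperbolic pair (0, \<nu>) with the pair (i, p) containing i\<close>
  define \<pi> where "\<pi> k = (if k = 0 then i else if k = i then 0 else if k = \<nu> then p else if k = p then \<nu> else k)" for k
  define \<tau> where "\<tau> k = (if k = 0 then j else if k = j then 0 else k)" for k
  have "isometry_pair (Gmat \<nu> \<delta> z) (2*\<nu>+\<delta>) (permute \<pi>) (permute \<pi>)"
    by (rule isometry_pair_permute[where \<tau> = \<tau>]) (use assms j ip in \<open>auto simp: \<pi>_def \<tau>_def\<close>)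
  then show ?thesis
    by (auto simp: \<pi>_def)
qed

section \<open>Transitivity of the orthogonal graph\<close>

locale orthogonal_form = pow2_modulus +
  fixes \<nu> \<delta> :: nat and z :: int
  assumes nu_pos: "0 < \<nu>" and delta_le_2: "\<delta> \<le> 2" and z_odd: "odd z"
begin

abbreviation dim :: nat where "dim \<equiv> 2*\<nu>+\<delta>"
abbreviation G :: "nat \<Rightarrow> nat \<Rightarrow> int" where "G \<equiv> Gmat \<nu> \<delta> z"

lemma dim_pos: "0 < dim" and nu_lt_dim: "\<nu> < dim"
  using nu_pos by simp_all

lemma hyperbolic_pair_unit_vec:
  "quad G dim (unit_vec 0) = 0" "quad G dim (unit_vec \<nu>) = 0"
  "polar G dim (unit_vec \<nu>) (unit_vec 0) = 1" "polar G dim (unit_vec 0) (unit_vec \<nu>) = 1"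
  using nu_pos delta_le_2 polar_commute[of G dim "unit_vec 0"]
  by (simp_all add: quad_Gmat_unit_vec polar_Gmat_unit_vec) (simp_all add: unit_vec_def)

lemma class_map_unit_vec:
  assumes T: "isometry_pair G dim T S" and k: "k < dim" and a: "\<exists>i<dim. odd (a i)"
    and l: "odd l" and Tk: "cong_vec N dim (T (unit_vec k)) (\<lambda>i. l * a i)"
  shows "class_map dim T (eqcls n dim (unit_vec k)) = eqcls n dim a"
proof -
  have "class_map dim T (eqcls n dim (unit_vec k)) = eqcls n dim (T (unit_vec k))"
    using class_map_eqcls[OF T supported_unit_vec[OF k] odd_entry_unit_vec[OF k]] .
  also have "\<dots> = eqcls n dim a"
    using eqcls_cong_vec[OF Tk] eqcls_scale[OF a l] by simp
  finally show ?thesis .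
qed

lemma isometry_pair_onto_isotropic:
  assumes a: "a \<in> Vset n dim" "N dvd quad G dim a"
  shows "\<exists>T S l. isometry_pair G dim T S \<and> odd l \<and> cong_vec N dim (T (unit_vec 0)) (\<lambda>i. l * a i)"
proof -
  have sa: "supported dim a" "\<exists>i<dim. odd (a i)"
    using a(1) by (simp_all add: Vset_iff)
  have "even (quad G dim a)"
    using a(2) n_pos dvd_trans[of 2 N] by (simp add: dvd_power)
  then obtain i where i: "i < 2*\<nu>" "odd (a i)"
    using Gmat_isotropic_odd_hyperbolic_coord[OF delta_le_2 z_odd sa(2)] by blast
  obtain \<pi> where P: "isometry_pair G dim (permute \<pi>) (permute \<pi>)" and "\<pi> 0 = i"
    using exists_permute_hyperbolic_coord[OF delta_le_2 i(1)] by blast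
  define x where "x = permute \<pi> a"
  note Piso = isometry_pairD(1)[OF P] and PP = isometry_pairD(3)[OF P, of a]
  have "polar G dim x (unit_vec \<nu>) = x 0"
    using polar_Gmat_unit_vec[OF delta_le_2 nu_pos] by (simp add: polar_commute)
  then have "odd (polar G dim x (unit_vec \<nu>))"
    using i \<open>\<pi> 0 = i\<close> by (simp add: x_def permute_def)
  moreover have "N dvd quad G dim x" "supported dim x"
    using a(2) sa(1) Piso by (simp_all add: x_def isometry_quad isometry_supported)
  ultimately obtain T S l where T: "isometry_pair G dim T S" "odd l"
      "cong_vec N dim (T (unit_vec 0)) (\<lambda>i. l * x i)"
    using isometry_pair_hyperbolic_mod[of G dim "unit_vec 0" "unit_vec \<nu>" x]
      hyperbolic_pair_unit_vec supported_unit_vec[OF dim_pos] supported_unit_vec[OF nu_lt_dim]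
    by blast
  have "supported dim (T (unit_vec 0))"
    by (rule isometry_supported[OF isometry_pairD(1)[OF T(1)] supported_unit_vec[OF dim_pos]])
  moreover have "supported dim (\<lambda>i. l * x i)"
    using \<open>supported dim x\<close> by (simp add: supported_def)
  ultimately have "cong_vec N dim (permute \<pi> (T (unit_vec 0))) (\<lambda>i. l * a i)"
    using cong_vec_isometry[OF Piso _ _ T(3)] isometry_scale[OF Piso] PP by (simp add: x_def)
  then show ?thesis
    using isometry_pair_comp[OF P T(1)] T(2) by blast
qed

lemma isometry_pair_onto_arc:
  assumes T: "isometry_pair G dim T S" and l: "odd l"
    and Te: "cong_vec N dim (T (unit_vec 0)) (\<lambda>i. l * a i)"
    and b: "b \<in> Vset n dim" "N dvd quad G dim b" and ab: "odd (polar G dim a b)"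
  shows "\<exists>T' S' \<mu>. isometry_pair G dim T' S' \<and> odd \<mu>
    \<and> cong_vec N dim (T' (unit_vec 0)) (\<lambda>i. l * a i) \<and> cong_vec N dim (T' (unit_vec \<nu>)) (\<lambda>i. \<mu> * b i)"
proof -
  note Tiso = isometry_pairD(1,2)[OF T] and TS = isometry_pairD(4)[OF T, of b]
  have sb: "supported dim b"
    using b(1) by (simp add: Vset_iff)
  define y where "y = S b"
  have "polar G dim y (unit_vec 0) = polar G dim b (T (unit_vec 0))"
    using polar_isometry[OF Tiso(1), of y "unit_vec 0"] TS by (simp add: y_def)
  moreover have "[polar G dim b (T (unit_vec 0)) = l * polar G dim b a] (mod N)"
    using cong_polar[OF cong_vec_refl Te] by simp
  ultimately have "odd (polar G dim y (unit_vec 0))"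
    using l ab cong_even_iff by (simp add: polar_commute[of G dim a])
  moreover have "N dvd quad G dim y" "supported dim y"
    using b(2) sb Tiso(2) by (simp_all add: y_def isometry_quad isometry_supported)
  ultimately obtain E E' \<mu> where E: "isometry_pair G dim E E'" "E (unit_vec 0) = unit_vec 0" "odd \<mu>"
      "cong_vec N dim (E (unit_vec \<nu>)) (\<lambda>i. \<mu> * y i)"
    using isometry_pair_hyperbolic_mod[of G dim "unit_vec \<nu>" "unit_vec 0" y]
      hyperbolic_pair_unit_vec supported_unit_vec[OF dim_pos] supported_unit_vec[OF nu_lt_dim]
    by blast
  have "supported dim (E (unit_vec \<nu>))"
    by (rule isometry_supported[OF isometry_pairD(1)[OF E(1)] supported_unit_vec[OF nu_lt_dim]])
  moreover have "supported dim (\<lambda>i. \<mu> * y i)"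
    using \<open>supported dim y\<close> by (simp add: supported_def)
  ultimately have "cong_vec N dim (T (E (unit_vec \<nu>))) (\<lambda>i. \<mu> * b i)"
    using cong_vec_isometry[OF Tiso(1) _ _ E(4)] isometry_scale[OF Tiso(1)] TS by (simp add: y_def)
  then show ?thesis
    using isometry_pair_comp[OF T E(1)] E(2,3) Te
    by (intro exI[of _ "\<lambda>x. T (E x)"] exI[of _ "\<lambda>x. E' (S x)"] exI[of _ \<mu>]) simp
qed

lemma unit_vec_isotropic_points:
  "eqcls n dim (unit_vec 0) \<in> isotropic_points n dim G"
  "eqcls n dim (unit_vec \<nu>) \<in> isotropic_points n dim G"
  using hyperbolic_pair_unit_vec odd_entry_unit_vec[OF dim_pos] odd_entry_unit_vec[OF nu_lt_dim]
  by (simp_all add: eqcls_in_isotropic_points)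

lemma graph_aut_onto_vertex:
  assumes "X \<in> isotropic_points n dim G"
  shows "\<exists>\<sigma>. graph_aut (isotropic_points n dim G) (polar_adj n dim G) \<sigma> \<and> \<sigma> (eqcls n dim (unit_vec 0)) = X"
proof -
  obtain a where a: "a \<in> Vset n dim" "N dvd quad G dim a" "X = eqcls n dim a"
    using assms by (rule isotropic_pointsE)
  obtain T S l where T: "isometry_pair G dim T S" "odd l" "cong_vec N dim (T (unit_vec 0)) (\<lambda>i. l * a i)"
    using isometry_pair_onto_isotropic[OF a(1,2)] by blast
  have "\<exists>i<dim. odd (a i)"
    using a(1) by (simp add: Vset_iff)
  then show ?thesis
    using class_map_graph_aut[OF T(1)] class_map_unit_vec[OF T(1) dim_pos _ T(2,3)] a(3)
    by (intro exI[of _ "class_map dim T"]) simp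
qed

lemma graph_aut_onto_arc:
  assumes X: "X \<in> isotropic_points n dim G" and Y: "Y \<in> isotropic_points n dim G"
    and XY: "polar_adj n dim G X Y"
  shows "\<exists>\<sigma>. graph_aut (isotropic_points n dim G) (polar_adj n dim G) \<sigma>
    \<and> \<sigma> (eqcls n dim (unit_vec 0)) = X \<and> \<sigma> (eqcls n dim (unit_vec \<nu>)) = Y"
proof -
  obtain a where a: "a \<in> Vset n dim" "N dvd quad G dim a" "X = eqcls n dim a"
    using X by (rule isotropic_pointsE)
  obtain b where b: "b \<in> Vset n dim" "N dvd quad G dim b" "Y = eqcls n dim b"
    using Y by (rule isotropic_pointsE)
  have odd_a: "\<exists>i<dim. odd (a i)" and odd_b: "\<exists>i<dim. odd (b i)"
    using a(1) b(1) by (simp_all add: Vset_iff)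
  have "odd (polar G dim a b)"
    using XY polar_adj_eqcls_iff[OF odd_a odd_b] a(3) b(3) by simp
  then obtain T S l where "isometry_pair G dim T S" "odd l" "cong_vec N dim (T (unit_vec 0)) (\<lambda>i. l * a i)"
    using isometry_pair_onto_isotropic[OF a(1,2)] by blast
  then obtain T' S' \<mu> where T': "isometry_pair G dim T' S'" "odd \<mu>"
      "cong_vec N dim (T' (unit_vec 0)) (\<lambda>i. l * a i)" "cong_vec N dim (T' (unit_vec \<nu>)) (\<lambda>i. \<mu> * b i)"
    using isometry_pair_onto_arc[OF _ _ _ b(1,2) \<open>odd (polar G dim a b)\<close>] by blast
  show ?thesis
    using class_map_graph_aut[OF T'(1)] a(3) b(3)
      class_map_unit_vec[OF T'(1) dim_pos odd_a \<open>odd l\<close> T'(3)]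
      class_map_unit_vec[OF T'(1) nu_lt_dim odd_b T'(2,4)]
    by (intro exI[of _ "class_map dim T'"]) simp
qed

end

theorem theorem2p5:
  fixes n \<nu> \<delta> :: nat and z :: int
  assumes "n \<ge> 1" and "\<nu> \<ge> 1" and "\<delta> \<in> {0, 1, 2}" and "zunit n z"
  shows "vertex_transitive (orth_vertices n \<nu> \<delta> z) (orth_adj n \<nu> \<delta> z)
       \<and> arc_transitive (orth_vertices n \<nu> \<delta> z) (orth_adj n \<nu> \<delta> z)"
proof -
  interpret orthogonal_form n \<nu> \<delta> z
    using assms pow2_modulus.zunit_iff_odd[of n z] by unfold_locales (auto simp: pow2_modulus_def)
  have "orth_vertices n \<nu> \<delta> z = isotropic_points n dim G" "orth_adj n \<nu> \<delta> z = polar_adj n dim G"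
    by (simp_all add: orth_vertices_def isotropic_points_def fun_eq_iff orth_adj_def polar_adj_def)
  then show ?thesis
    using vertex_transitiveI[OF unit_vec_isotropic_points(1) graph_aut_onto_vertex]
      arc_transitiveI[OF unit_vec_isotropic_points graph_aut_onto_arc]
    by simp
qed

end
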